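(* Let $F\subset\mathbb{Z}$ be a finite union of intervals of length $n$, and let $a=|\{s\in\mathbb{Z}: s+[0,n)\subset F\}|$. Suppose $u\in\mathcal{A}^F$ satisfies $|W_n(u)|=j<a$. Then every $n$-repeat cover $\mathcal{R}$ for $u$ satisfies $|A(\mathcal{R})|\ge a+n-j-1$.
   Context: $\mathcal{A}$ is a finite alphabet. Intervals are integer intervals, e.g. $[0,n)=\{0,\dots,n-1\}$, and $t+I=\{t+s:s\in I\}$. For $F\subset\mathbb{Z}$, $\mathcal{C}_n(F)=\{t+[0,n): t+[0,n)\subset F\}$. For $u\in\mathcal{A}^F$ and an interval $I\subset F$, $u_I$ denotes the restriction of $u$ to $I$, read as a word; $W_n(u)=\{u_I: I\in\mathcal{C}_n(F)\}$ is the set of distinct words of length $n$ appearing in $u$. A pair $(I_1,I_2)\in\mathcal{C}_n(F)\times\mathcal{C}_n(F)$ is an $n$-repeat for $u$ if $u_{I_1}=u_{I_2}$, $I_1\neq I_2$, and $I_1$ is the lexicographically (leftmost) minimal occurrence of the word $u_{I_1}$ in $u$. For $\mathcal{R}\subset\mathcal{C}_n(F)\times\mathcal{C}_n(F)$, $A(\mathcal{R})=\bigcup_{(I_1,I_2)\in\mathcal{R}}I_2$. $\mathcal{R}$ is an $n$-repeat cover for $u$ if every pair in $\mathcal{R}$ is an $n$-repeat for $u$ and for every $n$-repeat $(I_1,I_2)$ for $u$ we have $I_2\subset A(\mathcal{R})$. *)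

theory Defs
  imports Main
begin

definition intv :: "int \<Rightarrow> nat \<Rightarrow> int set" where
  "intv t n = {t..<t + int n}"

definition Cn :: "nat \<Rightarrow> int set \<Rightarrow> int set set" where
  "Cn n F = {intv t n | t. intv t n \<subseteq> F}"

definition word :: "(int \<Rightarrow> 'a) \<Rightarrow> nat \<Rightarrow> int set \<Rightarrow> 'a list" where
  "word u n I = map (\<lambda>i. u (Min I + int i)) [0..<n]"

definition Wn :: "nat \<Rightarrow> int set \<Rightarrow> (int \<Rightarrow> 'a) \<Rightarrow> 'a list set" where
  "Wn n F u = word u n ` Cn n F"

definition is_repeat :: "nat \<Rightarrow> int set \<Rightarrow> (int \<Rightarrow> 'a) \<Rightarrow> int set \<Rightarrow> int set \<Rightarrow> bool" where
  "is_repeat n F u I1 I2 \<longleftrightarrow>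
     I1 \<in> Cn n F \<and> I2 \<in> Cn n F \<and> word u n I1 = word u n I2 \<and> I1 \<noteq> I2 \<and>
     (\<forall>I \<in> Cn n F. word u n I = word u n I1 \<longrightarrow> Min I1 \<le> Min I)"

definition Aset :: "(int set \<times> int set) set \<Rightarrow> int set" where
  "Aset R = (\<Union>(I1, I2) \<in> R. I2)"

definition is_repeat_cover ::
  "nat \<Rightarrow> int set \<Rightarrow> (int \<Rightarrow> 'a) \<Rightarrow> (int set \<times> int set) set \<Rightarrow> bool" where
  "is_repeat_cover n F u R \<longleftrightarrow>
     (\<forall>(I1, I2) \<in> R. is_repeat n F u I1 I2) \<and>
     (\<forall>I1 I2. is_repeat n F u I1 I2 \<longrightarrow> I2 \<subseteq> Aset R)"

end

theory Submission
  imports Defs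
begin

text \<open>Call a window start late if the same word already occurs at an earlier start. The first
  occurrences are mapped injectively onto the \<open>j\<close> words, so at least \<open>a - j\<close> starts are late.
  A late window is the second half of an \<open>n\<close>-repeat whose first half is the leftmost occurrence of
  its word, so a repeat cover contains all late windows. Finally, any \<open>k \<ge> 1\<close> windows of length
  \<open>n\<close> cover at least \<open>k + n - 1\<close> points: their starts plus the \<open>n - 1\<close> points after the last one.\<close>

lemma Min_intv: "0 < n \<Longrightarrow> Min (intv s n) = s"
  unfolding intv_def by (intro Min_eqI) auto

lemma intv_eq_iff: "0 < n \<Longrightarrow> intv s n = intv s' n \<longleftrightarrow> s = s'"
  by (metis Min_intv)

lemma finite_window_starts:
  assumes "0 < n" "finite F"
  shows "finite {s. intv s n \<subseteq> F}"
proof (rule finite_subset[OF _ assms(2)])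
  show "{s. intv s n \<subseteq> F} \<subseteq> F"
    using assms(1) unfolding intv_def by auto
qed

lemma Cn_eq_image: "Cn n F = (\<lambda>s. intv s n) ` {s. intv s n \<subseteq> F}"
  unfolding Cn_def by auto

lemma card_UN_intv_ge:
  assumes "finite X" "X \<noteq> {}" "0 < n"
  shows "card X + n - 1 \<le> card (\<Union>s\<in>X. intv s n)"
proof -
  define M where "M = Max X"
  have "M \<in> X" and le_M: "\<And>x. x \<in> X \<Longrightarrow> x \<le> M"
    using assms(1,2) unfolding M_def by simp_all
  have sub: "X \<union> {M+1..<M + int n} \<subseteq> (\<Union>s\<in>X. intv s n)"
  proof -
    have "X \<subseteq> (\<Union>s\<in>X. intv s n)"
      using assms(3) unfolding intv_def by force
    moreover have "{M+1..<M + int n} \<subseteq> intv M n"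
      unfolding intv_def by auto
    ultimately show ?thesis
      using \<open>M \<in> X\<close> by blast
  qed
  have "X \<inter> {M+1..<M + int n} = {}"
    using le_M by fastforce
  then have "card (X \<union> {M+1..<M + int n}) = card X + (n - 1)"
    using card_Un_disjoint[OF assms(1)] by simp
  moreover have "finite (\<Union>s\<in>X. intv s n)"
    using assms(1) unfolding intv_def by auto
  ultimately show ?thesis
    using card_mono[OF _ sub] by fastforce
qed

lemma card_le_card_image_plus_late:
  fixes f :: "'a::linorder \<Rightarrow> 'b"
  assumes "finite S"
  shows "card S \<le> card (f ` S) + card {s \<in> S. \<exists>t\<in>S. t < s \<and> f t = f s}"
    (is "_ \<le> _ + card ?late")
proof -
  have "inj_on f (S - ?late)"
  proof (rule inj_onI)
    fix x y assume "x \<in> S - ?late" "y \<in> S - ?late" "f x = f y"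
    then have "x \<in> S" "y \<in> S" "\<not> (y < x)" "\<not> (x < y)"
      by auto
    then show "x = y" by simp
  qed
  then have "card (S - ?late) = card (f ` (S - ?late))"
    by (rule card_image[symmetric])
  also have "\<dots> \<le> card (f ` S)"
    using assms by (intro card_mono) auto
  finally have "card (S - ?late) \<le> card (f ` S)" .
  moreover have "card S = card (S - ?late) + card ?late"
    using assms by (simp add: card_Diff_subset card_mono)
  ultimately show ?thesis by linarith
qed

lemma is_repeat_of_earlier_occurrence:
  assumes "0 < n" "finite F" "intv t n \<subseteq> F" "intv s n \<subseteq> F" "t < s"
    and "word u n (intv t n) = word u n (intv s n)"
  shows "\<exists>m. is_repeat n F u (intv m n) (intv s n)"
proof -
  define Occ where "Occ = {r. intv r n \<subseteq> F \<and> word u n (intv r n) = word u n (intv s n)}"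
  have "finite Occ"
    using finite_window_starts[OF assms(1,2)] unfolding Occ_def by (rule finite_subset[rotated]) auto
  define m where "m = Min Occ"
  have "t \<in> Occ"
    using assms(3,6) unfolding Occ_def by simp
  then have "m \<in> Occ" and le_m: "\<And>r. r \<in> Occ \<Longrightarrow> m \<le> r"
    using \<open>finite Occ\<close> unfolding m_def by (auto intro: Min_in)
  have "m < s"
    using le_m[OF \<open>t \<in> Occ\<close>] assms(5) by simp
  have "is_repeat n F u (intv m n) (intv s n)"
    unfolding is_repeat_def Cn_eq_image
  proof (intro conjI ballI impI)
    show "intv m n \<noteq> intv s n"
      using \<open>m < s\<close> intv_eq_iff[OF assms(1)] by simp
  next
    fix I assume "I \<in> (\<lambda>r. intv r n) ` {r. intv r n \<subseteq> F}" "word u n I = word u n (intv m n)"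
    then obtain r where "I = intv r n" "r \<in> Occ"
      using \<open>m \<in> Occ\<close> unfolding Occ_def by auto
    then show "Min (intv m n) \<le> Min I"
      using le_m Min_intv[OF assms(1)] by simp
  qed (use \<open>m \<in> Occ\<close> assms(4) in \<open>auto simp: Occ_def\<close>)
  then show ?thesis ..
qed

lemma Aset_subset_if_repeat_cover:
  "is_repeat_cover n F u R \<Longrightarrow> Aset R \<subseteq> F"
  unfolding is_repeat_cover_def Aset_def is_repeat_def Cn_def by fastforce

lemma repeat_cover_contains_later_occurrence:
  assumes "is_repeat_cover n F u R" "0 < n" "finite F"
    and "intv t n \<subseteq> F" "intv s n \<subseteq> F" "t < s"
    and "word u n (intv t n) = word u n (intv s n)"
  shows "intv s n \<subseteq> Aset R"
proof -
  obtain m where "is_repeat n F u (intv m n) (intv s n)"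
    using is_repeat_of_earlier_occurrence[OF assms(2-)] by blast
  then show ?thesis
    using assms(1) unfolding is_repeat_cover_def by blast
qed

theorem mainTheorem4:
  fixes n :: nat and F :: "int set" and u :: "int \<Rightarrow> 'a::finite"
    and R :: "(int set \<times> int set) set" and T :: "int set" and a j :: nat
  assumes "0 < n"
    and "finite T" and "F = (\<Union>t\<in>T. intv t n)"
    and "a = card {s. intv s n \<subseteq> F}"
    and "card (Wn n F u) = j" and "j < a"
    and "is_repeat_cover n F u R"
  shows "card (Aset R) \<ge> a + n - j - 1"
proof -
  define S where "S = {s. intv s n \<subseteq> F}"
  define wd where "wd s = word u n (intv s n)" for s
  define Late where "Late = {s \<in> S. \<exists>t\<in>S. t < s \<and> wd t = wd s}"
  have "finite F"
    using assms(2,3) unfolding intv_def by auto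
  then have "finite S" "finite Late"
    using finite_window_starts[OF assms(1)] unfolding S_def Late_def by simp_all
  have "Wn n F u = wd ` S"
    unfolding Wn_def Cn_eq_image S_def wd_def by auto
  then have "a \<le> j + card Late"
    using card_le_card_image_plus_late[OF \<open>finite S\<close>, of wd] assms(4,5)
    unfolding S_def Late_def by simp
  then have "Late \<noteq> {}"
    using assms(6) by auto
  have "(\<Union>s\<in>Late. intv s n) \<subseteq> Aset R"
    using repeat_cover_contains_later_occurrence[OF assms(7,1) \<open>finite F\<close>]
    unfolding Late_def S_def wd_def by blast
  moreover have "finite (Aset R)"
    using Aset_subset_if_repeat_cover[OF assms(7)] \<open>finite F\<close> by (rule finite_subset)
  ultimately have "card (\<Union>s\<in>Late. intv s n) \<le> card (Aset R)"
    by (rule card_mono[rotated])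
  then show ?thesis
    using card_UN_intv_ge[OF \<open>finite Late\<close> \<open>Late \<noteq> {}\<close> assms(1)] \<open>a \<le> j + card Late\<close>
    by linarith
qed

end
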